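(* Let $X$ be a set, $B=(B,+,0)$ a unitary magma, $(A,k,q,s,p)$ a retraction point from $X$ to $B$, and $\varphi(x,b,x',b')=q\big((k(x)+s(b))+(k(x')+s(b'))\big)$. Write $0$ also for $q(0)\in X$ and set $x+x'=\varphi(x,0,x',0)$, $\xi(b,x')=\varphi(0,b,x',0)$, $\rho_{b'}(x)=\varphi(x,0,0,b')$. 1. If $A=(A,+,0)$ is a monoid (i.e. $+$ is associative), then: (a) $(X,+,q(0))$ and $(B,+,0)$ are monoids; (b) $A$ is in bijection with $\{(x,b)\in X\times B\mid \rho_b(x)=x\}$ via the mutually inverse assignments $a\mapsto(q(a),p(a))$ and $(x,b)\mapsto k(x)+s(b)$; (c) $\varphi(x,b,x',b')=\rho_{b+b'}(x+\xi(b,x'))$ for all $x,x'\in X$, $b,b'\in B$; (d) every retraction point of the form $(B,k',q',s',p')$ (from any set $Y$ to any unitary magma $C$) is composable with $(A,k,q,s,p)$. 2. If $A=(A,+,0)$ is a left loop, then: (a) $k(q(a))=a-s(p(a))$ for all $a\in A$; (b) $k(\varphi(x,b,x',b'))=\big((k(x)+s(b))+(k(x')+s(b'))\big)-s(b+b')$ for all $x,x'\in X$, $b,b'\in B$; (c) $\rho_b(x)=x$ for all $x\in X$, $b\in B$; (d) $k(\xi(b,x'))=(s(b)+k(x'))-s(b)$ for all $x'\in X$, $b\in B$; (e) $A$ is in bijection with $X\times B$ via the mutually inverse assignments $a\mapsto(q(a),p(a))$ and $(x,b)\mapsto k(x)+s(b)$.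
   Context: A unitary magma is a set with a binary operation $+$ and an element $0$ with $b+0=b=0+b$ for all $b$; morphisms preserve $+$ and $0$. Given a set $X$ and a unitary magma $B$, a retraction point from $X$ to $B$ is a tuple $(A,k,q,s,p)$ where $A=(A,+,0)$ is a unitary magma, $k\colon X\to A$ and $q\colon A\to X$ are maps, $s\colon B\to A$ and $p\colon A\to B$ are morphisms of unitary magmas, and $p(s(b))=b$, $q(k(x))=x$, $p(k(x))=0$, $q(s(b))=q(0)$, and $k(q(a))+s(p(a))=a$ for all $x\in X$, $b\in B$, $a\in A$. Composability: for a retraction point $(A,k,q,s,p)$ from $X$ to $B$ and a retraction point $(B,k',q',s',p')$ from a set $Y$ to a unitary magma $C$, let $A\times_B Y=\{(a,y)\in A\times Y\mid p(a)=k'(y)\}$ with first projection $\pi_1$, and $q''\colon A\to A\times_B Y$, $q''(a)=\big(k(q(a))+s(k'(q'(p(a)))),\ q'(p(a))\big)$; $(B,k',q',s',p')$ is composable with $(A,k,q,s,p)$ if $(A,\pi_1,q'',ss',p'p)$ is a retraction point from the set $A\times_B Y$ to $C$. A left loop is a unitary magma $(A,+,0)$ such that for all $a,c\in A$ there is a unique $u\in A$ with $a=u+c$; this $u$ is denoted $a-c$. *)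

theory Defs
  imports "HOL-Library.FuncSet"
begin

definition unitary_magma :: "'a set \<Rightarrow> ('a \<Rightarrow> 'a \<Rightarrow> 'a) \<Rightarrow> 'a \<Rightarrow> bool" where
  "unitary_magma M f z \<longleftrightarrow> z \<in> M \<and> (\<forall>a\<in>M. \<forall>b\<in>M. f a b \<in> M)
     \<and> (\<forall>b\<in>M. f b z = b \<and> f z b = b)"

definition monoid_on :: "'a set \<Rightarrow> ('a \<Rightarrow> 'a \<Rightarrow> 'a) \<Rightarrow> 'a \<Rightarrow> bool" where
  "monoid_on M f z \<longleftrightarrow> unitary_magma M f z
     \<and> (\<forall>a\<in>M. \<forall>b\<in>M. \<forall>c\<in>M. f (f a b) c = f a (f b c))"

definition magma_hom :: "'a set \<Rightarrow> ('a \<Rightarrow> 'a \<Rightarrow> 'a) \<Rightarrow> 'a \<Rightarrow>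
    'b set \<Rightarrow> ('b \<Rightarrow> 'b \<Rightarrow> 'b) \<Rightarrow> 'b \<Rightarrow> ('a \<Rightarrow> 'b) \<Rightarrow> bool" where
  "magma_hom M f z N g w h \<longleftrightarrow> h \<in> M \<rightarrow> N \<and> h z = w
     \<and> (\<forall>a\<in>M. \<forall>b\<in>M. h (f a b) = g (h a) (h b))"

definition retraction_point ::
  "'x set \<Rightarrow> 'b set \<Rightarrow> ('b \<Rightarrow> 'b \<Rightarrow> 'b) \<Rightarrow> 'b \<Rightarrow>
   'a set \<Rightarrow> ('a \<Rightarrow> 'a \<Rightarrow> 'a) \<Rightarrow> 'a \<Rightarrow>
   ('x \<Rightarrow> 'a) \<Rightarrow> ('a \<Rightarrow> 'x) \<Rightarrow> ('b \<Rightarrow> 'a) \<Rightarrow> ('a \<Rightarrow> 'b) \<Rightarrow> bool" where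
  "retraction_point X B plusB zB A plusA zA k q s p \<longleftrightarrow>
     unitary_magma B plusB zB \<and> unitary_magma A plusA zA
     \<and> k \<in> X \<rightarrow> A \<and> q \<in> A \<rightarrow> X
     \<and> magma_hom B plusB zB A plusA zA s \<and> magma_hom A plusA zA B plusB zB p
     \<and> (\<forall>b\<in>B. p (s b) = b) \<and> (\<forall>x\<in>X. q (k x) = x) \<and> (\<forall>x\<in>X. p (k x) = zB)
     \<and> (\<forall>b\<in>B. q (s b) = q zA) \<and> (\<forall>a\<in>A. plusA (k (q a)) (s (p a)) = a)"

definition fibre_prod :: "'a set \<Rightarrow> ('a \<Rightarrow> 'b) \<Rightarrow> 'y set \<Rightarrow> ('y \<Rightarrow> 'b) \<Rightarrow> ('a \<times> 'y) set" where
  "fibre_prod A p Y k' = {(a, y). a \<in> A \<and> y \<in> Y \<and> p a = k' y}"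

definition composable ::
  "'x set \<Rightarrow> 'b set \<Rightarrow> ('b \<Rightarrow> 'b \<Rightarrow> 'b) \<Rightarrow> 'b \<Rightarrow>
   'a set \<Rightarrow> ('a \<Rightarrow> 'a \<Rightarrow> 'a) \<Rightarrow> 'a \<Rightarrow>
   ('x \<Rightarrow> 'a) \<Rightarrow> ('a \<Rightarrow> 'x) \<Rightarrow> ('b \<Rightarrow> 'a) \<Rightarrow> ('a \<Rightarrow> 'b) \<Rightarrow>
   'y set \<Rightarrow> 'c set \<Rightarrow> ('c \<Rightarrow> 'c \<Rightarrow> 'c) \<Rightarrow> 'c \<Rightarrow>
   ('y \<Rightarrow> 'b) \<Rightarrow> ('b \<Rightarrow> 'y) \<Rightarrow> ('c \<Rightarrow> 'b) \<Rightarrow> ('b \<Rightarrow> 'c) \<Rightarrow> bool" where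
  "composable X B plusB zB A plusA zA k q s p Y C plusC zC k' q' s' p' \<longleftrightarrow>
     retraction_point (fibre_prod A p Y k') C plusC zC A plusA zA
       fst
       (\<lambda>a. (plusA (k (q a)) (s (k' (q' (p a)))), q' (p a)))
       (s \<circ> s') (p' \<circ> p)"

definition left_loop :: "'a set \<Rightarrow> ('a \<Rightarrow> 'a \<Rightarrow> 'a) \<Rightarrow> 'a \<Rightarrow> bool" where
  "left_loop M f z \<longleftrightarrow> unitary_magma M f z \<and> (\<forall>a\<in>M. \<forall>c\<in>M. \<exists>!u. u \<in> M \<and> a = f u c)"

definition lsub :: "'a set \<Rightarrow> ('a \<Rightarrow> 'a \<Rightarrow> 'a) \<Rightarrow> 'a \<Rightarrow> 'a \<Rightarrow> 'a" where
  "lsub M f a c = (THE u. u \<in> M \<and> a = f u c)"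

definition phi :: "('a \<Rightarrow> 'a \<Rightarrow> 'a) \<Rightarrow> ('x \<Rightarrow> 'a) \<Rightarrow> ('a \<Rightarrow> 'x) \<Rightarrow> ('b \<Rightarrow> 'a)
    \<Rightarrow> 'x \<Rightarrow> 'b \<Rightarrow> 'x \<Rightarrow> 'b \<Rightarrow> 'x" where
  "phi plusA k q s x b x' b' = q (plusA (plusA (k x) (s b)) (plusA (k x') (s b')))"

definition xplus :: "('a \<Rightarrow> 'a \<Rightarrow> 'a) \<Rightarrow> 'a \<Rightarrow> ('x \<Rightarrow> 'a) \<Rightarrow> ('a \<Rightarrow> 'x) \<Rightarrow> ('b \<Rightarrow> 'a) \<Rightarrow> 'b
    \<Rightarrow> 'x \<Rightarrow> 'x \<Rightarrow> 'x" where
  "xplus plusA zA k q s zB x x' = phi plusA k q s x zB x' zB"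

definition xi :: "('a \<Rightarrow> 'a \<Rightarrow> 'a) \<Rightarrow> 'a \<Rightarrow> ('x \<Rightarrow> 'a) \<Rightarrow> ('a \<Rightarrow> 'x) \<Rightarrow> ('b \<Rightarrow> 'a) \<Rightarrow> 'b
    \<Rightarrow> 'b \<Rightarrow> 'x \<Rightarrow> 'x" where
  "xi plusA zA k q s zB b x' = phi plusA k q s (q zA) b x' zB"

definition rho :: "('a \<Rightarrow> 'a \<Rightarrow> 'a) \<Rightarrow> 'a \<Rightarrow> ('x \<Rightarrow> 'a) \<Rightarrow> ('a \<Rightarrow> 'x) \<Rightarrow> ('b \<Rightarrow> 'a) \<Rightarrow> 'b
    \<Rightarrow> 'b \<Rightarrow> 'x \<Rightarrow> 'x" where
  "rho plusA zA k q s zB b' x = phi plusA k q s x zB (q zA) b'"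

end

theory Submission
  imports Defs
begin

text \<open>Everything rests on the decomposition a = k (q a) + s (p a) together with
  p (k x + s b) = b: they make a \<mapsto> (q a, p a) a bijection onto the pairs (x, b) with
  q (k x + s b) = x, i.e. \<rho> b x = x, inverted by (x, b) \<mapsto> k x + s b.
  Elements with p a = 0 satisfy k (q a) = a; with associativity this lets sums such as
  k x + k y and s b + k x' be rebracketed through k and q, giving the monoid laws on X,
  the formula for \<phi> and composability, while B inherits associativity along the split
  monomorphism s. In a left loop, cancelling s b in k (q (k x + s b)) + s b = k x + s b
  gives q (k x + s b) = x, so every pair is stable.\<close>

lemma magma_hom_comp:
  assumes "magma_hom M f z N g w h" and "magma_hom N g w P r v h'"
  shows "magma_hom M f z P r v (h' \<circ> h)"
  using assms unfolding magma_hom_def by (auto simp: Pi_iff)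

lemma monoid_on_retract:
  assumes "unitary_magma B f z" and "monoid_on A g w"
    and "magma_hom B f z A g w s" and "magma_hom A g w B f z p"
    and "\<And>b. b \<in> B \<Longrightarrow> p (s b) = b"
  shows "monoid_on B f z"
  unfolding monoid_on_def
proof (intro conjI ballI assms(1))
  fix a b c assume abc: "a \<in> B" "b \<in> B" "c \<in> B"
  have hom: "\<And>a b. a \<in> B \<Longrightarrow> b \<in> B \<Longrightarrow> s (f a b) = g (s a) (s b)"
    and closed: "\<And>a b. a \<in> B \<Longrightarrow> b \<in> B \<Longrightarrow> f a b \<in> B"
    and s_in: "\<And>b. b \<in> B \<Longrightarrow> s b \<in> A"
    using assms(1,3) unfolding magma_hom_def unitary_magma_def by auto
  have assoc: "g (g (s a) (s b)) (s c) = g (s a) (g (s b) (s c))"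
    using assms(2) abc s_in unfolding monoid_on_def by blast
  have "f (f a b) c = p (s (f (f a b) c))" using abc closed assms(5) by simp
  also have "\<dots> = p (s (f a (f b c)))" using abc assoc by (simp add: hom closed)
  also have "\<dots> = f a (f b c)" using abc closed assms(5) by simp
  finally show "f (f a b) c = f a (f b c)" .
qed

lemma lsub_eqI:
  assumes "left_loop M f z" and "a \<in> M" "c \<in> M" "u \<in> M" "a = f u c"
  shows "lsub M f a c = u"
proof -
  have "\<exists>!u. u \<in> M \<and> a = f u c" using assms(1-3) unfolding left_loop_def by blast
  then show ?thesis unfolding lsub_def by (rule the1_equality) (simp add: assms(4,5))
qed

lemma left_loop_right_cancel:
  assumes "left_loop M f z" and "f u c = f v c" and "u \<in> M" "v \<in> M" "c \<in> M"
  shows "u = v"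
proof -
  have "f u c \<in> M" using assms(1,3,5) unfolding left_loop_def unitary_magma_def by blast
  then show ?thesis
    using lsub_eqI[OF assms(1) _ assms(5,3) refl] lsub_eqI[OF assms(1) _ assms(5,4) assms(2)] by simp
qed

locale retraction_setting =
  fixes X :: "'x set" and B :: "'b set" and plusB :: "'b \<Rightarrow> 'b \<Rightarrow> 'b" (infixl "\<oplus>\<^sub>B" 65)
    and zB :: 'b and A :: "'a set" and plusA :: "'a \<Rightarrow> 'a \<Rightarrow> 'a" (infixl "\<oplus>" 65)
    and zA :: 'a and k :: "'x \<Rightarrow> 'a" and q :: "'a \<Rightarrow> 'x" and s :: "'b \<Rightarrow> 'a" and p :: "'a \<Rightarrow> 'b"
  assumes retraction_point: "retraction_point X B plusB zB A plusA zA k q s p"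
begin

abbreviation "\<phi> \<equiv> phi plusA k q s"
abbreviation "\<rho> \<equiv> rho plusA zA k q s zB"
abbreviation "\<xi> \<equiv> xi plusA zA k q s zB"
abbreviation xadd (infixl "\<oplus>\<^sub>X" 65) where "xadd \<equiv> xplus plusA zA k q s zB"

lemma
  shows magma_B: "unitary_magma B (\<oplus>\<^sub>B) zB" and magma_A: "unitary_magma A (\<oplus>) zA"
    and s_hom: "magma_hom B (\<oplus>\<^sub>B) zB A (\<oplus>) zA s"
    and p_hom: "magma_hom A (\<oplus>) zA B (\<oplus>\<^sub>B) zB p"
    and zB_in [simp]: "zB \<in> B" and zA_in [simp]: "zA \<in> A"
    and plusB_closed [simp]: "\<lbrakk>b \<in> B; b' \<in> B\<rbrakk> \<Longrightarrow> b \<oplus>\<^sub>B b' \<in> B"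
    and plusA_closed [simp]: "\<lbrakk>a \<in> A; a' \<in> A\<rbrakk> \<Longrightarrow> a \<oplus> a' \<in> A"
    and plusB_zero [simp]: "b \<in> B \<Longrightarrow> b \<oplus>\<^sub>B zB = b" "b \<in> B \<Longrightarrow> zB \<oplus>\<^sub>B b = b"
    and plusA_zero [simp]: "a \<in> A \<Longrightarrow> a \<oplus> zA = a" "a \<in> A \<Longrightarrow> zA \<oplus> a = a"
    and k_in [simp]: "x \<in> X \<Longrightarrow> k x \<in> A" and q_in [simp]: "a \<in> A \<Longrightarrow> q a \<in> X"
    and s_in [simp]: "b \<in> B \<Longrightarrow> s b \<in> A" and p_in [simp]: "a \<in> A \<Longrightarrow> p a \<in> B"
    and s_zero [simp]: "s zB = zA" and p_zero [simp]: "p zA = zB"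
    and s_plus [simp]: "\<lbrakk>b \<in> B; b' \<in> B\<rbrakk> \<Longrightarrow> s (b \<oplus>\<^sub>B b') = s b \<oplus> s b'"
    and p_plus [simp]: "\<lbrakk>a \<in> A; a' \<in> A\<rbrakk> \<Longrightarrow> p (a \<oplus> a') = p a \<oplus>\<^sub>B p a'"
    and p_s [simp]: "b \<in> B \<Longrightarrow> p (s b) = b" and q_k [simp]: "x \<in> X \<Longrightarrow> q (k x) = x"
    and p_k [simp]: "x \<in> X \<Longrightarrow> p (k x) = zB" and q_s: "b \<in> B \<Longrightarrow> q (s b) = q zA"
    and k_q_plus_s_p [simp]: "a \<in> A \<Longrightarrow> k (q a) \<oplus> s (p a) = a"
  using retraction_point
  unfolding retraction_point_def unitary_magma_def magma_hom_def Pi_iff by auto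

lemma k_q_eq_if_p_zero: "\<lbrakk>a \<in> A; p a = zB\<rbrakk> \<Longrightarrow> k (q a) = a"
  using k_q_plus_s_p[of a] by simp

lemma k_q_zero [simp]: "k (q zA) = zA"
  by (simp add: k_q_eq_if_p_zero)

lemma rho_eq: "\<lbrakk>x \<in> X; b \<in> B\<rbrakk> \<Longrightarrow> \<rho> b x = q (k x \<oplus> s b)"
  unfolding rho_def phi_def by simp

lemma xi_eq: "\<lbrakk>x \<in> X; b \<in> B\<rbrakk> \<Longrightarrow> \<xi> b x = q (s b \<oplus> k x)"
  unfolding xi_def phi_def by simp

lemma xplus_eq: "\<lbrakk>x \<in> X; y \<in> X\<rbrakk> \<Longrightarrow> x \<oplus>\<^sub>X y = q (k x \<oplus> k y)"
  unfolding xplus_def phi_def by simp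

definition stable_pairs :: "('x \<times> 'b) set" where
  "stable_pairs = {(x, b). x \<in> X \<and> b \<in> B \<and> \<rho> b x = x}"

lemma pair_in_stable_pairs: "a \<in> A \<Longrightarrow> (q a, p a) \<in> stable_pairs"
  unfolding stable_pairs_def by (simp add: rho_eq)

lemma q_p_of_stable_pair:
  "(x, b) \<in> stable_pairs \<Longrightarrow> k x \<oplus> s b \<in> A \<and> (q (k x \<oplus> s b), p (k x \<oplus> s b)) = (x, b)"
  unfolding stable_pairs_def by (auto simp: rho_eq)

text \<open>The paper states this under associativity, but the decomposition
  k (q a) + s (p a) = a alone suffices.\<close>
lemma bij_betw_stable_pairs: "bij_betw (\<lambda>a. (q a, p a)) A stable_pairs"
  by (rule bij_betw_byWitness[where f' = "\<lambda>(x, b). k x \<oplus> s b"])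
    (auto dest: q_p_of_stable_pair simp: pair_in_stable_pairs)

end

locale monoid_retraction = retraction_setting +
  assumes monoid_A: "monoid_on A plusA zA"
begin

lemma plusA_assoc: "\<lbrakk>a \<in> A; b \<in> A; c \<in> A\<rbrakk> \<Longrightarrow> a \<oplus> b \<oplus> c = a \<oplus> (b \<oplus> c)"
  using monoid_A unfolding monoid_on_def by blast

lemma k_q_plus_k [simp]: "\<lbrakk>x \<in> X; y \<in> X\<rbrakk> \<Longrightarrow> k (q (k x \<oplus> k y)) = k x \<oplus> k y"
  by (simp add: k_q_eq_if_p_zero)

lemma monoid_on_B: "monoid_on B (\<oplus>\<^sub>B) zB"
  by (rule monoid_on_retract[OF magma_B monoid_A s_hom p_hom p_s])

lemma monoid_on_X: "monoid_on X (\<oplus>\<^sub>X) (q zA)"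
  unfolding monoid_on_def unitary_magma_def
  by (simp add: xplus_eq plusA_assoc)

lemma phi_eq_rho_xplus_xi:
  assumes "x \<in> X" "b \<in> B" "x' \<in> X" "b' \<in> B"
  shows "\<phi> x b x' b' = \<rho> (b \<oplus>\<^sub>B b') (x \<oplus>\<^sub>X \<xi> b x')"
proof -
  define a where "a = s b \<oplus> k x'"
  have a_in: "a \<in> A" and a_decomp: "k (q a) \<oplus> s b = a"
    using assms k_q_plus_s_p[of a] by (simp_all add: a_def)
  have "\<rho> (b \<oplus>\<^sub>B b') (x \<oplus>\<^sub>X \<xi> b x') = q (k x \<oplus> k (q a) \<oplus> (s b \<oplus> s b'))"
    using assms a_in by (simp add: rho_eq xi_eq xplus_eq a_def[symmetric])
  also have "\<dots> = q (k x \<oplus> (k (q a) \<oplus> s b \<oplus> s b'))"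
    using assms a_in by (simp add: plusA_assoc)
  also have "\<dots> = q (k x \<oplus> (s b \<oplus> k x' \<oplus> s b'))"
    by (subst a_decomp) (simp add: a_def)
  also have "\<dots> = q (k x \<oplus> s b \<oplus> (k x' \<oplus> s b'))"
    using assms by (simp add: plusA_assoc)
  finally show ?thesis unfolding phi_def by simp
qed

lemma composable_with:
  fixes Y :: "'y set" and C :: "'z set"
  assumes "retraction_point Y C plusC zC B plusB zB k' q' s' p'"
  shows "composable X B plusB zB A plusA zA k q s p Y C plusC zC k' q' s' p'"
proof -
  interpret R': retraction_setting Y C plusC zC B plusB zB k' q' s' p'
    by (fact retraction_setting.intro[OF assms])
  define q'' where "q'' a = (k (q a) \<oplus> s (k' (q' (p a))), q' (p a))" for a
  have q''_in: "q'' a \<in> fibre_prod A p Y k'" if "a \<in> A" for a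
    using that by (simp add: q''_def fibre_prod_def)
  have q''_fst: "q'' (fst y) = y" if y_in: "y \<in> fibre_prod A p Y k'" for y
  proof -
    obtain a y' where y: "y = (a, y')" and "a \<in> A" "y' \<in> Y" and p_a: "p a = k' y'"
      using y_in by (auto simp: fibre_prod_def)
    moreover have "k (q a) \<oplus> s (k' y') = a" using k_q_plus_s_p[of a] \<open>a \<in> A\<close> p_a by simp
    moreover have "q' (p a) = y'" using \<open>y' \<in> Y\<close> p_a by simp
    ultimately show ?thesis by (simp add: q''_def)
  qed
  have q''_s: "q'' (s (s' c)) = q'' zA" if "c \<in> C" for c
    using that by (simp add: q''_def q_s R'.q_s)
  have decomp: "fst (q'' a) \<oplus> s (s' (p' (p a))) = a" if "a \<in> A" for a
  proof -
    have "fst (q'' a) \<oplus> s (s' (p' (p a))) = k (q a) \<oplus> (s (k' (q' (p a))) \<oplus> s (s' (p' (p a))))"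
      using that by (simp add: q''_def plusA_assoc)
    also have "\<dots> = k (q a) \<oplus> s (k' (q' (p a)) \<oplus>\<^sub>B s' (p' (p a)))"
      using that by (subst s_plus) simp_all
    also have "\<dots> = a" using that by simp
    finally show ?thesis .
  qed
  show ?thesis
    unfolding composable_def retraction_point_def q''_def[symmetric]
    using R'.magma_B magma_A magma_hom_comp[OF R'.s_hom s_hom] magma_hom_comp[OF p_hom R'.p_hom]
      q''_in q''_fst q''_s decomp
    by (auto simp: fibre_prod_def)
qed

end

locale left_loop_retraction = retraction_setting +
  assumes left_loop_A: "left_loop A plusA zA"
begin

lemma k_q_eq_lsub: "a \<in> A \<Longrightarrow> k (q a) = lsub A (\<oplus>) a (s (p a))"
  by (rule lsub_eqI[OF left_loop_A, symmetric]) simp_all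

lemma k_phi_eq_lsub:
  "\<lbrakk>x \<in> X; b \<in> B; x' \<in> X; b' \<in> B\<rbrakk> \<Longrightarrow>
     k (\<phi> x b x' b') = lsub A (\<oplus>) (k x \<oplus> s b \<oplus> (k x' \<oplus> s b')) (s (b \<oplus>\<^sub>B b'))"
  unfolding phi_def by (simp add: k_q_eq_lsub)

lemma q_k_plus_s [simp]:
  assumes "x \<in> X" "b \<in> B"
  shows "q (k x \<oplus> s b) = x"
proof -
  have "k (q (k x \<oplus> s b)) \<oplus> s b = k x \<oplus> s b"
    using assms k_q_plus_s_p[of "k x \<oplus> s b"] by simp
  then have "k (q (k x \<oplus> s b)) = k x"
    by (rule left_loop_right_cancel[OF left_loop_A]) (use assms in simp_all)
  then have "q (k (q (k x \<oplus> s b))) = q (k x)" by (rule arg_cong)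
  then show ?thesis using assms by simp
qed

lemma rho_trivial: "\<lbrakk>x \<in> X; b \<in> B\<rbrakk> \<Longrightarrow> \<rho> b x = x"
  by (simp add: rho_eq)

lemma k_xi_eq_lsub: "\<lbrakk>x' \<in> X; b \<in> B\<rbrakk> \<Longrightarrow> k (\<xi> b x') = lsub A (\<oplus>) (s b \<oplus> k x') (s b)"
  by (simp add: xi_eq k_q_eq_lsub)

lemma stable_pairs_eq_Times: "stable_pairs = X \<times> B"
  unfolding stable_pairs_def by (auto simp: rho_trivial)

end

theorem proposition6p2:
  fixes X :: "'x set" and B :: "'b set" and plusB :: "'b \<Rightarrow> 'b \<Rightarrow> 'b" and zB :: 'b
    and A :: "'a set" and plusA :: "'a \<Rightarrow> 'a \<Rightarrow> 'a" and zA :: 'a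
    and k :: "'x \<Rightarrow> 'a" and q :: "'a \<Rightarrow> 'x" and s :: "'b \<Rightarrow> 'a" and p :: "'a \<Rightarrow> 'b"
  assumes rp: "retraction_point X B plusB zB A plusA zA k q s p"
  defines "S \<equiv> {(x, b). x \<in> X \<and> b \<in> B \<and> rho plusA zA k q s zB b x = x}"
  shows
   "(monoid_on A plusA zA \<longrightarrow>
      monoid_on X (xplus plusA zA k q s zB) (q zA)
      \<and> monoid_on B plusB zB
      \<and> bij_betw (\<lambda>a. (q a, p a)) A S
      \<and> (\<forall>a\<in>A. (q a, p a) \<in> S \<and> plusA (k (q a)) (s (p a)) = a)
      \<and> (\<forall>(x, b)\<in>S. plusA (k x) (s b) \<in> A \<and> (q (plusA (k x) (s b)), p (plusA (k x) (s b))) = (x, b))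
      \<and> (\<forall>x\<in>X. \<forall>b\<in>B. \<forall>x'\<in>X. \<forall>b'\<in>B.
           phi plusA k q s x b x' b'
           = rho plusA zA k q s zB (plusB b b')
               (xplus plusA zA k q s zB x (xi plusA zA k q s zB b x')))
      \<and> (\<forall>(Y :: 'y set) (C :: 'c set) plusC zC k' q' s' p'.
           retraction_point Y C plusC zC B plusB zB k' q' s' p' \<longrightarrow>
           composable X B plusB zB A plusA zA k q s p Y C plusC zC k' q' s' p'))
    \<and>
    (left_loop A plusA zA \<longrightarrow>
      (\<forall>a\<in>A. k (q a) = lsub A plusA a (s (p a)))
      \<and> (\<forall>x\<in>X. \<forall>b\<in>B. \<forall>x'\<in>X. \<forall>b'\<in>B.
           k (phi plusA k q s x b x' b')
           = lsub A plusA (plusA (plusA (k x) (s b)) (plusA (k x') (s b'))) (s (plusB b b')))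
      \<and> (\<forall>x\<in>X. \<forall>b\<in>B. rho plusA zA k q s zB b x = x)
      \<and> (\<forall>x'\<in>X. \<forall>b\<in>B. k (xi plusA zA k q s zB b x') = lsub A plusA (plusA (s b) (k x')) (s b))
      \<and> bij_betw (\<lambda>a. (q a, p a)) A (X \<times> B)
      \<and> (\<forall>a\<in>A. plusA (k (q a)) (s (p a)) = a)
      \<and> (\<forall>x\<in>X. \<forall>b\<in>B. plusA (k x) (s b) \<in> A \<and> (q (plusA (k x) (s b)), p (plusA (k x) (s b))) = (x, b)))"
proof (intro conjI impI)
  interpret retraction_setting X B plusB zB A plusA zA k q s p
    by (fact retraction_setting.intro[OF rp])
  have S: "S = stable_pairs" unfolding S_def stable_pairs_def ..
  assume "monoid_on A plusA zA"
  with rp interpret monoid_retraction X B plusB zB A plusA zA k q s p by unfold_locales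
  show "monoid_on X (xplus plusA zA k q s zB) (q zA)" by (fact monoid_on_X)
  show "monoid_on B plusB zB" by (fact monoid_on_B)
  show "bij_betw (\<lambda>a. (q a, p a)) A S" unfolding S by (fact bij_betw_stable_pairs)
  show "\<forall>a\<in>A. (q a, p a) \<in> S \<and> plusA (k (q a)) (s (p a)) = a"
    by (simp add: S pair_in_stable_pairs)
  show "\<forall>(x, b)\<in>S. plusA (k x) (s b) \<in> A \<and> (q (plusA (k x) (s b)), p (plusA (k x) (s b))) = (x, b)"
    unfolding S using q_p_of_stable_pair by blast
  show "\<forall>x\<in>X. \<forall>b\<in>B. \<forall>x'\<in>X. \<forall>b'\<in>B. phi plusA k q s x b x' b'
      = rho plusA zA k q s zB (plusB b b') (xplus plusA zA k q s zB x (xi plusA zA k q s zB b x'))"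
    by (simp add: phi_eq_rho_xplus_xi)
  show "\<forall>(Y :: 'y set) (C :: 'c set) plusC zC k' q' s' p'.
      retraction_point Y C plusC zC B plusB zB k' q' s' p' \<longrightarrow>
      composable X B plusB zB A plusA zA k q s p Y C plusC zC k' q' s' p'"
    by (intro allI impI composable_with)
next
  assume "left_loop A plusA zA"
  with rp interpret left_loop_retraction X B plusB zB A plusA zA k q s p by unfold_locales
  show "\<forall>a\<in>A. k (q a) = lsub A plusA a (s (p a))" by (simp add: k_q_eq_lsub)
  show "\<forall>x\<in>X. \<forall>b\<in>B. \<forall>x'\<in>X. \<forall>b'\<in>B. k (phi plusA k q s x b x' b')
      = lsub A plusA (plusA (plusA (k x) (s b)) (plusA (k x') (s b'))) (s (plusB b b'))"
    by (simp add: k_phi_eq_lsub)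
  show "\<forall>x\<in>X. \<forall>b\<in>B. rho plusA zA k q s zB b x = x" by (simp add: rho_trivial)
  show "\<forall>x'\<in>X. \<forall>b\<in>B. k (xi plusA zA k q s zB b x') = lsub A plusA (plusA (s b) (k x')) (s b)"
    by (simp add: k_xi_eq_lsub)
  show "bij_betw (\<lambda>a. (q a, p a)) A (X \<times> B)"
    using bij_betw_stable_pairs by (simp add: stable_pairs_eq_Times)
  show "\<forall>a\<in>A. plusA (k (q a)) (s (p a)) = a" by simp
  show "\<forall>x\<in>X. \<forall>b\<in>B. plusA (k x) (s b) \<in> A \<and> (q (plusA (k x) (s b)), p (plusA (k x) (s b))) = (x, b)"
    by simp
qed

end
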